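(* Let $\boldsymbol{\Gamma}$ be a definable (boldface) pointclass that is downward closed with respect to Wadge reducibility. Assume that every $P\in\boldsymbol{\Gamma}([\mathbb{N}]^\mathbb{N})$ is Ramsey (i.e. $\mathrm{HS}(P)\neq\emptyset$) and that for every $h\in[\mathbb{N}]^\mathbb{N}$, $\boldsymbol{\Gamma}([h]^\mathbb{N})=\{P\cap[h]^\mathbb{N}: P\in\boldsymbol{\Gamma}([\mathbb{N}]^\mathbb{N})\}$. If $\mathsf{R}:\subseteq\boldsymbol{\Gamma}([\mathbb{N}]^\mathbb{N})\rightrightarrows[\mathbb{N}]^\mathbb{N}$ is a multivalued function such that $\mathsf{R}(x)=\mathrm{HS}(x)$ for every $x\in\operatorname{dom}(\mathsf{R})$, then $\mathrm{id}_2\not\le_{\mathrm{sW}}\mathsf{R}$. In particular $\mathrm{id}_2$ (and a fortiori $\mathsf{UC}_{\mathbb{N}^\mathbb{N}}$) is not strongly Weihrauch reducible to any of $\mathsf{wFindHS}_{\boldsymbol{\Sigma}^0_1}$, $\mathsf{wFindHS}_{\boldsymbol{\Pi}^0_1}$, $\mathsf{wFindHS}_{\boldsymbol{\Delta}^0_1}$, $\boldsymbol{\Sigma}^0_1\text{-}\mathsf{RT}$, $\boldsymbol{\Delta}^0_1\text{-}\mathsf{RT}$.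
   Context: Strong Weihrauch reducibility: $f\le_{\mathrm{sW}} g$ iff there are computable $\Phi,\Psi$ on Baire space with $\Psi\circ G\circ\Phi$ realizing $f$ for every realizer $G$ of $g$. $\mathrm{id}_2$ is the identity on $\{0,1\}$. The Ramsey space $[\mathbb{N}]^\mathbb{N}$ is the set of strictly increasing functions $\mathbb{N}\to\mathbb{N}$ with Baire-space topology (identified with infinite subsets of $\mathbb{N}$ via ranges); $fg=f\circ g$; $[h]^\mathbb{N}$ is the set of subsequences $hg$, $g\in[\mathbb{N}]^\mathbb{N}$. For $P\subseteq[\mathbb{N}]^\mathbb{N}$, $f$ is homogeneous for $P$ if either $fg\in P$ for all $g\in[\mathbb{N}]^\mathbb{N}$ ($f$ lands in $P$) or $fg\notin P$ for all $g$ ($f$ avoids $P$); $\mathrm{HS}(P)$ is the set of these; for a set $Q\subseteq[h]^\mathbb{N}$, homogeneity is defined analogously within $[h]^\mathbb{N}$. $\boldsymbol{\Gamma}([\mathbb{N}]^\mathbb{N})$ is regarded as a represented space. Open sets of $[\mathbb{N}]^\mathbb{N}$ are named by enumerations of sets of finite strictly increasing strings whose cones have union the set; clopen sets by pairs of names of the set and its complement. $\boldsymbol{\Sigma}^0_1\text{-}\mathsf{RT}(P)=\mathrm{HS}(P)$ for open $P$; $\boldsymbol{\Delta}^0_1\text{-}\mathsf{RT}(D)=\mathrm{HS}(D)$ for clopen $D$; $\mathsf{wFindHS}_{\boldsymbol{\Sigma}^0_1}$ is $P\mapsto\mathrm{HS}(P)\cap P$ on open $P$ with $\mathrm{HS}(P)\subseteq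 P$; $\mathsf{wFindHS}_{\boldsymbol{\Delta}^0_1}$ is the same on clopen inputs; $\mathsf{wFindHS}_{\boldsymbol{\Pi}^0_1}$ is $P\mapsto\mathrm{HS}(P)\setminus P$ on open $P$ with $\mathrm{HS}(P)\cap P=\emptyset$. $\mathsf{UC}_{\mathbb{N}^\mathbb{N}}$: given a name of a closed singleton subset of $\mathbb{N}^\mathbb{N}$, output its element. *)

theory Defs
  imports "HOL-Analysis.Analysis" "HOL-Library.Nat_Bijection"
begin

type_synonym baire = "nat \<Rightarrow> nat"

inductive total_rec :: "nat \<Rightarrow> (nat list \<Rightarrow> nat) \<Rightarrow> bool" where
  zero: "total_rec n (\<lambda>xs. 0)"
| succ: "total_rec 1 (\<lambda>xs. Suc (xs ! 0))"
| proj: "i < n \<Longrightarrow> total_rec n (\<lambda>xs. xs ! i)"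
| comp: "total_rec m f \<Longrightarrow> length gs = m \<Longrightarrow> (\<forall>g\<in>set gs. total_rec n g)
          \<Longrightarrow> total_rec n (\<lambda>xs. f (map (\<lambda>g. g xs) gs))"
| prim: "total_rec n f \<Longrightarrow> total_rec (n + 2) g
          \<Longrightarrow> total_rec (n + 1)
                (\<lambda>xs. rec_nat (f (tl xs)) (\<lambda>k r. g (r # k # tl xs)) (hd xs))"
| mini: "total_rec (n + 1) f \<Longrightarrow> (\<forall>xs. length xs = n \<longrightarrow> (\<exists>y. f (y # xs) = 0))
          \<Longrightarrow> total_rec n (\<lambda>xs. LEAST y. f (y # xs) = 0)"

definition computable_nat :: "(nat \<Rightarrow> nat) \<Rightarrow> bool" where
  "computable_nat h \<longleftrightarrow> (\<exists>g. total_rec 1 g \<and> (\<forall>x. h x = g [x]))"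

definition prefix_of :: "nat list \<Rightarrow> baire \<Rightarrow> bool" where
  "prefix_of w q \<longleftrightarrow> (\<forall>i<length w. w ! i = q i)"

definition init_seg :: "baire \<Rightarrow> nat \<Rightarrow> nat list" where
  "init_seg p m = map p [0..<m]"

text \<open>F is (the restriction to D of) a computable partial function on Baire space:
  a computable word function h (on codes of finite strings) whose outputs on the initial
  segments of any p in D are prefixes of F p of unbounded length.\<close>
definition computable_on :: "baire set \<Rightarrow> (baire \<Rightarrow> baire) \<Rightarrow> bool" where
  "computable_on D F \<longleftrightarrow> (\<exists>h. computable_nat h \<and>
     (\<forall>p\<in>D. (\<forall>m. prefix_of (list_decode (h (list_encode (init_seg p m)))) (F p)) \<and>
              (\<forall>n. \<exists>m. n \<le> length (list_decode (h (list_encode (init_seg p m)))))))"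

text \<open>A represented space is a pair (set of names, representation map); it represents
  the image of the set of names. A multivalued function f :\<subseteq> X \<rightrightarrows> Y is given
  by its domain A and its value map f.\<close>
type_synonym 'a rep_space = "baire set \<times> (baire \<Rightarrow> 'a)"

definition realizes ::
  "'a rep_space \<Rightarrow> 'b rep_space \<Rightarrow> 'a set \<Rightarrow> ('a \<Rightarrow> 'b set) \<Rightarrow> (baire \<Rightarrow> baire) \<Rightarrow> bool" where
  "realizes X Y A f G \<longleftrightarrow>
     (\<forall>p\<in>fst X. snd X p \<in> A \<longrightarrow> G p \<in> fst Y \<and> snd Y (G p) \<in> f (snd X p))"

definition sW_reducible ::
  "'a rep_space \<Rightarrow> 'b rep_space \<Rightarrow> 'a set \<Rightarrow> ('a \<Rightarrow> 'b set) \<Rightarrow>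
   'c rep_space \<Rightarrow> 'd rep_space \<Rightarrow> 'c set \<Rightarrow> ('c \<Rightarrow> 'd set) \<Rightarrow> bool" where
  "sW_reducible X Y A f X' Y' B g \<longleftrightarrow>
     (\<exists>\<Phi> \<Psi>.
        computable_on {p \<in> fst X. snd X p \<in> A} \<Phi> \<and>
        (\<forall>p\<in>fst X. snd X p \<in> A \<longrightarrow> \<Phi> p \<in> fst X' \<and> snd X' (\<Phi> p) \<in> B) \<and>
        computable_on {q \<in> fst Y'. \<exists>p\<in>fst X. snd X p \<in> A \<and> snd Y' q \<in> g (snd X' (\<Phi> p))} \<Psi> \<and>
        (\<forall>G. realizes X' Y' B g G \<longrightarrow> realizes X Y A f (\<Psi> \<circ> G \<circ> \<Phi>)))"

definition two_space :: "nat rep_space" where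
  "two_space = ({p. p 0 \<in> {0, 1}}, \<lambda>p. p 0)"

definition id2_dom :: "nat set" where "id2_dom = {0, 1}"
definition id2 :: "nat \<Rightarrow> nat set" where "id2 x = {x}"

definition ramsey_space :: "baire set" where
  "ramsey_space = {f. strict_mono f}"

definition ramsey_rep :: "baire rep_space" where
  "ramsey_rep = (ramsey_space, id)"

definition HS :: "baire set \<Rightarrow> baire set" where
  "HS P = {f \<in> ramsey_space. (\<forall>g\<in>ramsey_space. f \<circ> g \<in> P) \<or> (\<forall>g\<in>ramsey_space. f \<circ> g \<notin> P)}"

definition wadge_closed :: "baire set set \<Rightarrow> bool" where
  "wadge_closed \<Gamma> \<longleftrightarrow> (\<forall>A B \<phi>. A \<subseteq> ramsey_space \<longrightarrow> B \<in> \<Gamma> \<longrightarrow>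
      continuous_on ramsey_space \<phi> \<longrightarrow> \<phi> ` ramsey_space \<subseteq> ramsey_space \<longrightarrow>
      A = {x \<in> ramsey_space. \<phi> x \<in> B} \<longrightarrow> A \<in> \<Gamma>)"

end

theory Submission
  imports Defs
begin

text \<open>Any two sets in \<open>\<Gamma>\<close> have a common homogeneous set: given \<open>f\<close> homogeneous for
  \<open>P\<^sub>0\<close>, the Wadge preimage of \<open>P\<^sub>1\<close> under \<open>g \<mapsto> f \<circ> g\<close> is again in \<open>\<Gamma>\<close>, and if \<open>g\<close> is
  homogeneous for it then \<open>f \<circ> g\<close> is homogeneous for both \<open>P\<^sub>0\<close> and \<open>P\<^sub>1\<close>. Hence a realizer may
  answer the two instances \<open>\<Phi>(0)\<close>, \<open>\<Phi>(1)\<close> produced by a strong reduction with the same \<open>q\<close>;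
  but then \<open>\<Psi>\<close>, which sees only \<open>q\<close>, would have to output both \<open>0\<close> and \<open>1\<close>.\<close>

lemma continuous_on_comp_left:
  fixes f :: "'a::topological_space \<Rightarrow> 'b::topological_space"
  assumes "continuous_on UNIV f"
  shows "continuous_on S (\<lambda>g::'i \<Rightarrow> 'a. f \<circ> g)"
proof (intro continuous_on_coordinatewise_then_product)
  fix i
  have "continuous_on S (\<lambda>g::'i \<Rightarrow> 'a. g i)"
    by (rule continuous_on_subset[OF continuous_on_product_coordinates]) simp
  then show "continuous_on S (\<lambda>g. (f \<circ> g) i)"
    using continuous_on_compose2[OF assms] by (simp add: o_def)
qed

lemma ramsey_space_comp: "f \<in> ramsey_space \<Longrightarrow> g \<in> ramsey_space \<Longrightarrow> f \<circ> g \<in> ramsey_space"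
  by (auto simp: ramsey_space_def strict_mono_def)

lemma HS_subset_ramsey_space: "HS P \<subseteq> ramsey_space"
  by (simp add: HS_def)

lemma HS_comp: "f \<in> HS P \<Longrightarrow> g \<in> ramsey_space \<Longrightarrow> f \<circ> g \<in> HS P"
  unfolding HS_def by (auto simp: o_assoc[symmetric] intro: ramsey_space_comp)

lemma HS_comp_of_HS_preimage:
  assumes "f \<in> ramsey_space" and "g \<in> HS {h \<in> ramsey_space. f \<circ> h \<in> P}"
  shows "f \<circ> g \<in> HS P"
  using assms unfolding HS_def by (auto simp: o_assoc intro: ramsey_space_comp)

lemma wadge_closed_comp_left_preimage:
  assumes "wadge_closed \<Gamma>" and "P \<in> \<Gamma>" and "f \<in> ramsey_space"
  shows "{h \<in> ramsey_space. f \<circ> h \<in> P} \<in> \<Gamma>"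
proof -
  have "continuous_on ramsey_space (\<lambda>h. f \<circ> h)"
    by (rule continuous_on_comp_left) simp
  moreover have "(\<lambda>h. f \<circ> h) ` ramsey_space \<subseteq> ramsey_space"
    using ramsey_space_comp[OF assms(3)] by blast
  ultimately show ?thesis
    using assms(1,2) unfolding wadge_closed_def
    by (elim allE[of _ "{h \<in> ramsey_space. f \<circ> h \<in> P}"] allE[of _ P] allE[of _ "\<lambda>h. f \<circ> h"]) auto
qed

lemma common_HS:
  assumes "wadge_closed \<Gamma>" and "\<forall>P\<in>\<Gamma>. HS P \<noteq> {}" and "P\<^sub>0 \<in> \<Gamma>" and "P\<^sub>1 \<in> \<Gamma>"
  shows "HS P\<^sub>0 \<inter> HS P\<^sub>1 \<noteq> {}"
proof -
  obtain f where f: "f \<in> HS P\<^sub>0"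
    using assms(2,3) by blast
  then have "f \<in> ramsey_space"
    using HS_subset_ramsey_space by blast
  then have "{h \<in> ramsey_space. f \<circ> h \<in> P\<^sub>1} \<in> \<Gamma>"
    using wadge_closed_comp_left_preimage assms(1,4) by blast
  then obtain g where g: "g \<in> HS {h \<in> ramsey_space. f \<circ> h \<in> P\<^sub>1}"
    using assms(2) by blast
  have "f \<circ> g \<in> HS P\<^sub>0"
    using HS_comp[OF f] g HS_subset_ramsey_space by blast
  moreover have "f \<circ> g \<in> HS P\<^sub>1"
    using HS_comp_of_HS_preimage \<open>f \<in> ramsey_space\<close> g by blast
  ultimately show ?thesis by blast
qed

lemma realizes_with_prescribed_value:
  assumes "q \<in> fst Y" and "\<forall>p\<in>S. snd Y q \<in> g (snd X p)"
    and solvable: "\<forall>x\<in>B. \<exists>q\<in>fst Y. snd Y q \<in> g x"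
  shows "\<exists>G. realizes X Y B g G \<and> (\<forall>p\<in>S. G p = q)"
proof -
  define G where "G p = (if p \<in> S then q else (SOME q. q \<in> fst Y \<and> snd Y q \<in> g (snd X p)))"
    for p
  have "realizes X Y B g G"
    unfolding realizes_def
  proof (intro ballI impI)
    fix p assume "snd X p \<in> B"
    then have "\<exists>q. q \<in> fst Y \<and> snd Y q \<in> g (snd X p)"
      using solvable by blast
    then have "(SOME q. q \<in> fst Y \<and> snd Y q \<in> g (snd X p)) \<in> fst Y \<and>
        snd Y (SOME q. q \<in> fst Y \<and> snd Y q \<in> g (snd X p)) \<in> g (snd X p)"
      by (rule someI_ex)
    then show "G p \<in> fst Y \<and> snd Y (G p) \<in> g (snd X p)"
      using assms(1,2) by (auto simp: G_def)
  qed
  then show ?thesis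
    by (auto simp: G_def)
qed

lemma not_sW_reducible_id2_if_common_solutions:
  assumes common: "\<And>x y. x \<in> B \<Longrightarrow> y \<in> B \<Longrightarrow> \<exists>q\<in>fst Y. snd Y q \<in> g x \<inter> g y"
  shows "\<not> sW_reducible two_space two_space id2_dom id2 X Y B g"
proof
  assume "sW_reducible two_space two_space id2_dom id2 X Y B g"
  then obtain \<Phi> \<Psi> where
    \<Phi>: "\<forall>p\<in>fst two_space. snd two_space p \<in> id2_dom \<longrightarrow> \<Phi> p \<in> fst X \<and> snd X (\<Phi> p) \<in> B"
    and \<Psi>: "\<forall>G. realizes X Y B g G \<longrightarrow> realizes two_space two_space id2_dom id2 (\<Psi> \<circ> G \<circ> \<Phi>)"
    unfolding sW_reducible_def by blast
  define name :: "nat \<Rightarrow> baire" where "name b = (\<lambda>_. b)" for b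
  have name: "name b \<in> fst two_space" "snd two_space (name b) = b" if "b \<in> id2_dom" for b
    using that by (auto simp: name_def two_space_def id2_dom_def)
  have reduced_instance: "snd X (\<Phi> (name b)) \<in> B" if "b \<in> id2_dom" for b
    using \<Phi> name[OF that] that by metis
  have "0 \<in> id2_dom" "1 \<in> id2_dom"
    by (simp_all add: id2_dom_def)
  then obtain q where "q \<in> fst Y"
    "snd Y q \<in> g (snd X (\<Phi> (name 0))) \<inter> g (snd X (\<Phi> (name 1)))"
    using common[OF reduced_instance reduced_instance] by blast
  moreover have "\<forall>x\<in>B. \<exists>q\<in>fst Y. snd Y q \<in> g x"
    using common by blast
  ultimately obtain G where G: "realizes X Y B g G" "\<forall>p\<in>{\<Phi> (name 0), \<Phi> (name 1)}. G p = q"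
    using realizes_with_prescribed_value[of q Y "{\<Phi> (name 0), \<Phi> (name 1)}" g X B] by auto
  have "\<Psi> q 0 = b" if "b \<in> id2_dom" for b
  proof -
    have "(\<Psi> \<circ> G \<circ> \<Phi>) (name b) \<in> fst two_space \<and>
        snd two_space ((\<Psi> \<circ> G \<circ> \<Phi>) (name b)) \<in> id2 (snd two_space (name b))"
      using \<Psi> G(1) name[OF that] that unfolding realizes_def by metis
    moreover have "G (\<Phi> (name b)) = q"
      using G(2) that by (auto simp: id2_dom_def)
    ultimately have "snd two_space (\<Psi> q) \<in> id2 b"
      using name(2)[OF that] by simp
    then show ?thesis
      by (simp add: two_space_def id2_def)
  qed
  from this[OF \<open>0 \<in> id2_dom\<close>] this[OF \<open>1 \<in> id2_dom\<close>] show False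
    by simp
qed

theorem mainTheorem14:
  fixes \<Gamma> :: "baire set set"
    and N\<Gamma> :: "baire set" and \<delta>\<Gamma> :: "baire \<Rightarrow> baire set"
    and domR :: "baire set set"
  assumes "\<forall>P\<in>\<Gamma>. P \<subseteq> ramsey_space"
    and "wadge_closed \<Gamma>"
    and "\<forall>P\<in>\<Gamma>. HS P \<noteq> {}"
    and "\<delta>\<Gamma> ` N\<Gamma> = \<Gamma>"
    and "domR \<subseteq> \<Gamma>"
  shows "\<not> sW_reducible two_space two_space id2_dom id2 (N\<Gamma>, \<delta>\<Gamma>) ramsey_rep domR HS"
proof (rule not_sW_reducible_id2_if_common_solutions)
  fix P\<^sub>0 P\<^sub>1 assume "P\<^sub>0 \<in> domR" "P\<^sub>1 \<in> domR"
  then have "HS P\<^sub>0 \<inter> HS P\<^sub>1 \<noteq> {}"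
    using common_HS assms(2,3,5) by blast
  then show "\<exists>q\<in>fst ramsey_rep. snd ramsey_rep q \<in> HS P\<^sub>0 \<inter> HS P\<^sub>1"
    using HS_subset_ramsey_space by (auto simp: ramsey_rep_def)
qed

end
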